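(* If $\dot G\in\mathcal C_1\cup\mathcal C_4\cup\mathcal C_5$ is a connected, non-complete, $5$-regular and $1$ net-regular SRSG with parameters $(n,5,a,b,c)$, then $(a,b)\neq(0,1)$.
   Context: A signed graph $\dot G=(G,\sigma)$ is a simple graph $G$ with $\sigma:E(G)\to\{\pm1\}$; adjacency matrix $A_{\dot G}$ has entries $\sigma(v_iv_j)$ for adjacent vertices and $0$ otherwise. Degree and connectedness refer to $G$; net-degree is $d^+(v)-d^-(v)$; $\rho$ net-regular means all net-degrees equal $\rho$. $\dot G$ on $n$ vertices is an SRSG if it is neither homogeneous complete nor edgeless and there are $r\in\mathbb N$, $a,b,c\in\mathbb Z$ with $(A^2_{\dot G})_{ii}=r$, $(A^2_{\dot G})_{ij}=a$ for positive edges, $b$ for negative edges, $c$ for distinct non-adjacent pairs; parameters $(n,r,a,b,c)$. Classes: $\mathcal C_1$: $a=-b$ and (complete, or non-complete with $c\neq0$); $\mathcal C_4$: $a\ne-b$, non-complete, $c=0$; $\mathcal C_5$: $a\neq-b$, non-complete, $c\notin\{0,\frac{a+b}{2}\}$. *)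

theory Defs
  imports Complex_Main
begin

definition signed_graph :: "'a set \<Rightarrow> ('a \<Rightarrow> 'a \<Rightarrow> bool) \<Rightarrow> ('a \<Rightarrow> 'a \<Rightarrow> int) \<Rightarrow> bool" where
  "signed_graph V E \<sigma> \<longleftrightarrow> finite V
     \<and> (\<forall>u v. E u v \<longrightarrow> u \<in> V \<and> v \<in> V)
     \<and> (\<forall>u. \<not> E u u)
     \<and> (\<forall>u v. E u v \<longrightarrow> E v u)
     \<and> (\<forall>u v. E u v \<longrightarrow> \<sigma> u v = \<sigma> v u)
     \<and> (\<forall>u v. E u v \<longrightarrow> \<sigma> u v = 1 \<or> \<sigma> u v = -1)"

definition adj :: "('a \<Rightarrow> 'a \<Rightarrow> bool) \<Rightarrow> ('a \<Rightarrow> 'a \<Rightarrow> int) \<Rightarrow> 'a \<Rightarrow> 'a \<Rightarrow> int" where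
  "adj E \<sigma> u v = (if E u v then \<sigma> u v else 0)"

definition adj_sq :: "'a set \<Rightarrow> ('a \<Rightarrow> 'a \<Rightarrow> bool) \<Rightarrow> ('a \<Rightarrow> 'a \<Rightarrow> int) \<Rightarrow> 'a \<Rightarrow> 'a \<Rightarrow> int" where
  "adj_sq V E \<sigma> u v = (\<Sum>w\<in>V. adj E \<sigma> u w * adj E \<sigma> w v)"

definition complete_graph :: "'a set \<Rightarrow> ('a \<Rightarrow> 'a \<Rightarrow> bool) \<Rightarrow> bool" where
  "complete_graph V E \<longleftrightarrow> (\<forall>u\<in>V. \<forall>v\<in>V. u \<noteq> v \<longrightarrow> E u v)"

definition homogeneous_complete :: "'a set \<Rightarrow> ('a \<Rightarrow> 'a \<Rightarrow> bool) \<Rightarrow> ('a \<Rightarrow> 'a \<Rightarrow> int) \<Rightarrow> bool" where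
  "homogeneous_complete V E \<sigma> \<longleftrightarrow> complete_graph V E \<and>
     ((\<forall>u v. E u v \<longrightarrow> \<sigma> u v = 1) \<or> (\<forall>u v. E u v \<longrightarrow> \<sigma> u v = -1))"

definition edgeless :: "'a set \<Rightarrow> ('a \<Rightarrow> 'a \<Rightarrow> bool) \<Rightarrow> bool" where
  "edgeless V E \<longleftrightarrow> (\<forall>u v. \<not> E u v)"

definition connected_graph :: "'a set \<Rightarrow> ('a \<Rightarrow> 'a \<Rightarrow> bool) \<Rightarrow> bool" where
  "connected_graph V E \<longleftrightarrow> (\<forall>u\<in>V. \<forall>v\<in>V. E\<^sup>*\<^sup>* u v)"

definition degree :: "'a set \<Rightarrow> ('a \<Rightarrow> 'a \<Rightarrow> bool) \<Rightarrow> 'a \<Rightarrow> nat" where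
  "degree V E v = card {w\<in>V. E v w}"

definition pos_degree :: "'a set \<Rightarrow> ('a \<Rightarrow> 'a \<Rightarrow> bool) \<Rightarrow> ('a \<Rightarrow> 'a \<Rightarrow> int) \<Rightarrow> 'a \<Rightarrow> nat" where
  "pos_degree V E \<sigma> v = card {w\<in>V. E v w \<and> \<sigma> v w = 1}"

definition neg_degree :: "'a set \<Rightarrow> ('a \<Rightarrow> 'a \<Rightarrow> bool) \<Rightarrow> ('a \<Rightarrow> 'a \<Rightarrow> int) \<Rightarrow> 'a \<Rightarrow> nat" where
  "neg_degree V E \<sigma> v = card {w\<in>V. E v w \<and> \<sigma> v w = -1}"

definition regular :: "'a set \<Rightarrow> ('a \<Rightarrow> 'a \<Rightarrow> bool) \<Rightarrow> nat \<Rightarrow> bool" where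
  "regular V E k \<longleftrightarrow> (\<forall>v\<in>V. degree V E v = k)"

definition net_regular :: "'a set \<Rightarrow> ('a \<Rightarrow> 'a \<Rightarrow> bool) \<Rightarrow> ('a \<Rightarrow> 'a \<Rightarrow> int) \<Rightarrow> int \<Rightarrow> bool" where
  "net_regular V E \<sigma> \<rho> \<longleftrightarrow>
     (\<forall>v\<in>V. int (pos_degree V E \<sigma> v) - int (neg_degree V E \<sigma> v) = \<rho>)"

definition srsg :: "'a set \<Rightarrow> ('a \<Rightarrow> 'a \<Rightarrow> bool) \<Rightarrow> ('a \<Rightarrow> 'a \<Rightarrow> int)
     \<Rightarrow> nat \<Rightarrow> nat \<Rightarrow> int \<Rightarrow> int \<Rightarrow> int \<Rightarrow> bool" where
  "srsg V E \<sigma> n r a b c \<longleftrightarrow> signed_graph V E \<sigma>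
     \<and> \<not> homogeneous_complete V E \<sigma> \<and> \<not> edgeless V E
     \<and> n = card V
     \<and> (\<forall>i\<in>V. adj_sq V E \<sigma> i i = int r)
     \<and> (\<forall>i\<in>V. \<forall>j\<in>V. E i j \<and> \<sigma> i j = 1 \<longrightarrow> adj_sq V E \<sigma> i j = a)
     \<and> (\<forall>i\<in>V. \<forall>j\<in>V. E i j \<and> \<sigma> i j = -1 \<longrightarrow> adj_sq V E \<sigma> i j = b)
     \<and> (\<forall>i\<in>V. \<forall>j\<in>V. i \<noteq> j \<and> \<not> E i j \<longrightarrow> adj_sq V E \<sigma> i j = c)"

definition class_C1 :: "'a set \<Rightarrow> ('a \<Rightarrow> 'a \<Rightarrow> bool) \<Rightarrow> int \<Rightarrow> int \<Rightarrow> int \<Rightarrow> bool" where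
  "class_C1 V E a b c \<longleftrightarrow> a = -b \<and>
     (complete_graph V E \<or> (\<not> complete_graph V E \<and> c \<noteq> 0))"

definition class_C4 :: "'a set \<Rightarrow> ('a \<Rightarrow> 'a \<Rightarrow> bool) \<Rightarrow> int \<Rightarrow> int \<Rightarrow> int \<Rightarrow> bool" where
  "class_C4 V E a b c \<longleftrightarrow> a \<noteq> -b \<and> \<not> complete_graph V E \<and> c = 0"

definition class_C5 :: "'a set \<Rightarrow> ('a \<Rightarrow> 'a \<Rightarrow> bool) \<Rightarrow> int \<Rightarrow> int \<Rightarrow> int \<Rightarrow> bool" where
  "class_C5 V E a b c \<longleftrightarrow> a \<noteq> -b \<and> \<not> complete_graph V E
     \<and> real_of_int c \<noteq> 0 \<and> real_of_int c \<noteq> real_of_int (a + b) / 2"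

end

theory Submission imports Defs begin

text \<open>Write \<open>A = P - N\<close> with \<open>P\<close>, \<open>N\<close> the 0/1 matrices of positive and negative edges;
  5-regularity and net-degree 1 give every vertex 3 positive and 2 negative neighbours.
  If \<open>(a, b) = (0, 1)\<close> then \<open>A\<^sup>2 = (5 - c) I - c P + (1 - c) N + c J\<close>, and comparing
  row sums with \<open>A\<^sup>2 1 = 1\<close> gives \<open>c (n - 6) = -6\<close>, so \<open>c \<in> {-6, -3, -2, -1}\<close>.
  Comparing \<open>A A\<^sup>2\<close> with \<open>A\<^sup>2 A\<close> gives \<open>(1 - 2 c) (P N - N P) = 0\<close>, hence \<open>P N = N P\<close> and
  \<open>A\<^sup>2 = P\<^sup>2 + N\<^sup>2 - 2 P N\<close>. Bounding the 2-walks between two vertices by the degree and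
  their common neighbours by inclusion--exclusion pins down the entries of \<open>P N\<close>, which is
  already contradictory for \<open>c = -6, -2, -3\<close>. For \<open>c = -1\<close> (so \<open>n = 12\<close>) it forces \<open>P N\<close>
  to be the indicator of non-adjacency: then no positive edge lies in a triangle, the two
  negative neighbours of a vertex are negatively adjacent, and non-adjacent vertices have
  exactly one common positive neighbour; chasing these facts around a vertex produces a
  triangle through a positive edge.\<close>

locale sgraph =
  fixes V :: "'a set" and E :: "'a \<Rightarrow> 'a \<Rightarrow> bool" and \<sigma> :: "'a \<Rightarrow> 'a \<Rightarrow> int"
  assumes signed_graph: "signed_graph V E \<sigma>"
begin

lemma finite_V: "finite V"
  and edge_in_V: "E u v \<Longrightarrow> u \<in> V \<and> v \<in> V"
  and no_loop: "\<not> E u u"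
  and edge_sym: "E u v \<Longrightarrow> E v u"
  and sign_sym: "E u v \<Longrightarrow> \<sigma> u v = \<sigma> v u"
  and sign_cases: "E u v \<Longrightarrow> \<sigma> u v = 1 \<or> \<sigma> u v = -1"
  using signed_graph unfolding signed_graph_def by auto

definition pos_edge :: "'a \<Rightarrow> 'a \<Rightarrow> bool" where
  "pos_edge x y \<longleftrightarrow> E x y \<and> \<sigma> x y = 1"

definition neg_edge :: "'a \<Rightarrow> 'a \<Rightarrow> bool" where
  "neg_edge x y \<longleftrightarrow> E x y \<and> \<sigma> x y = -1"

definition nonadj :: "'a \<Rightarrow> 'a \<Rightarrow> bool" where
  "nonadj x y \<longleftrightarrow> x \<noteq> y \<and> \<not> E x y"

definition walks2 :: "('a \<Rightarrow> 'a \<Rightarrow> bool) \<Rightarrow> ('a \<Rightarrow> 'a \<Rightarrow> bool) \<Rightarrow> 'a \<Rightarrow> 'a \<Rightarrow> int" where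
  "walks2 R T x y = (\<Sum>w\<in>V. of_bool (R x w \<and> T w y))"

lemma pos_edge_edge: "pos_edge x y \<Longrightarrow> E x y"
  and neg_edge_edge: "neg_edge x y \<Longrightarrow> E x y"
  and not_pos_and_neg_edge: "\<not> (pos_edge x y \<and> neg_edge x y)"
  by (auto simp: pos_edge_def neg_edge_def)

lemma edge_iff_pos_or_neg: "E x y \<longleftrightarrow> pos_edge x y \<or> neg_edge x y"
  using sign_cases by (auto simp: pos_edge_def neg_edge_def)

lemma pos_edge_sym: "pos_edge x y \<Longrightarrow> pos_edge y x"
  and neg_edge_sym: "neg_edge x y \<Longrightarrow> neg_edge y x"
  using edge_sym sign_sym by (auto simp: pos_edge_def neg_edge_def)

lemma pos_edge_in_V: "pos_edge x y \<Longrightarrow> x \<in> V \<and> y \<in> V"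
  and neg_edge_in_V: "neg_edge x y \<Longrightarrow> x \<in> V \<and> y \<in> V"
  using edge_in_V by (auto simp: pos_edge_def neg_edge_def)

lemma sum_of_bool_eq_card: "(\<Sum>w\<in>V. of_bool (P w)) = int (card {w\<in>V. P w})"
  using finite_V by (simp add: Int_def)

lemma degree_eq_sum: "int (degree V E x) = (\<Sum>w\<in>V. of_bool (E x w))"
  and pos_degree_eq_sum: "int (pos_degree V E \<sigma> x) = (\<Sum>w\<in>V. of_bool (pos_edge x w))"
  and neg_degree_eq_sum: "int (neg_degree V E \<sigma> x) = (\<Sum>w\<in>V. of_bool (neg_edge x w))"
  by (simp_all only: sum_of_bool_eq_card degree_def pos_degree_def neg_degree_def
      pos_edge_def neg_edge_def)

lemma pos_degree_eq_card: "pos_degree V E \<sigma> x = card {w\<in>V. pos_edge x w}"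
  and neg_degree_eq_card: "neg_degree V E \<sigma> x = card {w\<in>V. neg_edge x w}"
  by (simp_all add: pos_degree_def neg_degree_def pos_edge_def neg_edge_def)

lemma pos_neighbours:
  assumes "pos_degree V E \<sigma> x = 3"
  obtains p q s where "distinct [p, q, s]" and "\<And>z. pos_edge x z \<longleftrightarrow> z \<in> {p, q, s}"
proof -
  obtain p q s where "{w\<in>V. pos_edge x w} = {p, q, s}" "distinct [p, q, s]"
    using assms by (auto simp: pos_degree_eq_card card_3_iff)
  with pos_edge_in_V that show ?thesis by blast
qed

lemma pos_neighbours_through:
  assumes "pos_degree V E \<sigma> x = 3" "pos_edge x y"
  obtains v w where "distinct [y, v, w]" and "\<And>z. pos_edge x z \<longleftrightarrow> z \<in> {y, v, w}"
proof -
  obtain p q s where d: "distinct [p, q, s]" and nb: "\<And>z. pos_edge x z \<longleftrightarrow> z \<in> {p, q, s}"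
    using pos_neighbours[OF assms(1)] by blast
  from assms(2) nb consider "y = p" | "y = q" | "y = s"
    by blast
  then show ?thesis
  proof cases
    case 1
    with d nb show ?thesis by (intro that[of q s]) auto
  next
    case 2
    with d nb show ?thesis by (intro that[of p s]) auto
  next
    case 3
    with d nb show ?thesis by (intro that[of p q]) auto
  qed
qed

lemma degree_eq_pos_degree_add_neg_degree:
  "degree V E x = pos_degree V E \<sigma> x + neg_degree V E \<sigma> x"
proof -
  have "(\<Sum>w\<in>V. of_bool (E x w)) = (\<Sum>w\<in>V. of_bool (pos_edge x w) + (of_bool (neg_edge x w) :: int))"
    using not_pos_and_neg_edge by (intro sum.cong) (auto simp: edge_iff_pos_or_neg)
  then show ?thesis
    using degree_eq_sum[of x] pos_degree_eq_sum[of x] neg_degree_eq_sum[of x]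
    by (simp add: sum.distrib)
qed

lemma walks2_eq_card: "walks2 R T x y = int (card {w\<in>V. R x w \<and> T w y})"
  unfolding walks2_def by (rule sum_of_bool_eq_card)

lemma walks2_nonneg: "0 \<le> walks2 R T x y"
  by (simp add: walks2_eq_card)

lemma walks2_pos_iff: "0 < walks2 R T x y \<longleftrightarrow> (\<exists>w\<in>V. R x w \<and> T w y)"
  using finite_V by (auto simp: walks2_eq_card card_gt_0_iff)

lemma walks2_le_1_unique:
  assumes "walks2 R T x y \<le> 1"
    and "u \<in> V" "R x u" "T u y" and "v \<in> V" "R x v" "T v y"
  shows "u = v"
proof (rule ccontr)
  assume "u \<noteq> v"
  then have "card {u, v} \<le> card {w\<in>V. R x w \<and> T w y}"
    using assms(2-) finite_V by (intro card_mono) auto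
  with \<open>u \<noteq> v\<close> assms(1) show False
    by (simp add: walks2_eq_card)
qed

lemma walks2_eq_right: "y \<in> V \<Longrightarrow> walks2 R (=) x y = of_bool (R x y)"
  and walks2_eq_left: "x \<in> V \<Longrightarrow> walks2 (=) T x y = of_bool (T x y)"
proof -
  have "(\<Sum>w\<in>V. of_bool (R x w \<and> w = y)) = (\<Sum>w\<in>V. if w = y then of_bool (R x y) else 0)"
    by (rule sum.cong) auto
  moreover have "(\<Sum>w\<in>V. of_bool (x = w \<and> T w y)) = (\<Sum>w\<in>V. if x = w then of_bool (T x y) else 0)"
    by (rule sum.cong) auto
  ultimately
  show "y \<in> V \<Longrightarrow> walks2 R (=) x y = of_bool (R x y)"
    and "x \<in> V \<Longrightarrow> walks2 (=) T x y = of_bool (T x y)"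
    using finite_V by (simp_all add: walks2_def sum.delta sum.delta' del: sum_of_bool_eq)
qed

lemma sum_walks2: "(\<Sum>y\<in>V. walks2 R T x y) = (\<Sum>w\<in>V. of_bool (R x w) * (\<Sum>y\<in>V. of_bool (T w y)))"
  unfolding walks2_def
  by (subst sum.swap) (simp only: of_bool_conj sum_distrib_left)

lemma walks2_edge_edge:
  "walks2 E E x y = walks2 pos_edge pos_edge x y + walks2 neg_edge neg_edge x y
     + walks2 pos_edge neg_edge x y + walks2 neg_edge pos_edge x y"
  unfolding walks2_def sum.distrib[symmetric]
  using not_pos_and_neg_edge by (intro sum.cong) (auto simp: edge_iff_pos_or_neg)

lemma walks2_le_degree: "walks2 E E x y \<le> int (degree V E x)"
  unfolding walks2_eq_card degree_def using finite_V by (auto intro: card_mono)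

lemma sum_nonadj:
  assumes "x \<in> V"
  shows "(\<Sum>y\<in>V. of_bool (nonadj x y)) = int (card V) - 1 - int (degree V E x)"
proof -
  have "(\<Sum>y\<in>V. of_bool (nonadj x y)) = (\<Sum>y\<in>V. 1 - of_bool (x = y) - (of_bool (E x y) :: int))"
    using no_loop by (intro sum.cong) (auto simp: nonadj_def)
  then show ?thesis
    using assms finite_V by (simp add: sum_subtractf degree_eq_sum)
qed

text \<open>Inclusion--exclusion for the neighbourhoods of two distinct vertices, which can only
  contain each other's vertex when these are adjacent.\<close>
lemma degree_add_le:
  assumes "x \<in> V" "y \<in> V" "x \<noteq> y"
  shows "int (degree V E x) + int (degree V E y)
    \<le> int (card V) - 2 + 2 * of_bool (E x y) + walks2 E E x y"
proof -
  define e :: int where "e = of_bool (E x y)"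
  have "of_bool (E x w) + of_bool (E y w)
    \<le> 1 - of_bool (w = x) - of_bool (w = y) + of_bool (E x w \<and> E w y)
       + e * (of_bool (w = x) + of_bool (w = y))" for w
    using assms(3) no_loop edge_sym by (auto simp: e_def)
  then have "(\<Sum>w\<in>V. of_bool (E x w) + of_bool (E y w))
    \<le> (\<Sum>w\<in>V. 1 - of_bool (w = x) - of_bool (w = y) + of_bool (E x w \<and> E w y)
       + e * (of_bool (w = x) + of_bool (w = y)))"
    by (rule sum_mono)
  also have "\<dots> = int (card V) - 2 + 2 * e + walks2 E E x y"
    using assms finite_V
    by (simp add: walks2_def sum.distrib sum_subtractf flip: sum_distrib_left)
  finally show ?thesis
    by (simp add: degree_eq_sum sum.distrib e_def del: sum_of_bool_eq)
qed

lemma adj_eq: "adj E \<sigma> x y = of_bool (pos_edge x y) - of_bool (neg_edge x y)"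
  using sign_cases by (auto simp: adj_def pos_edge_def neg_edge_def)

lemma adj_sym: "adj E \<sigma> x y = adj E \<sigma> y x"
  using edge_sym sign_sym by (auto simp: adj_def)

lemma adj_sq_eq_walks2:
  "adj_sq V E \<sigma> x y = walks2 pos_edge pos_edge x y + walks2 neg_edge neg_edge x y
     - walks2 pos_edge neg_edge x y - walks2 neg_edge pos_edge x y"
proof -
  have "adj E \<sigma> x w * adj E \<sigma> w y = of_bool (pos_edge x w \<and> pos_edge w y)
     + of_bool (neg_edge x w \<and> neg_edge w y) - of_bool (pos_edge x w \<and> neg_edge w y)
     - of_bool (neg_edge x w \<and> pos_edge w y)" for w
    using not_pos_and_neg_edge by (auto simp: adj_eq)
  then show ?thesis
    by (simp add: adj_sq_def walks2_def sum.distrib sum_subtractf)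
qed

lemma sum_adj_mult:
  "(\<Sum>w\<in>V. adj E \<sigma> x w * of_bool (T w y)) = walks2 pos_edge T x y - walks2 neg_edge T x y"
  unfolding walks2_def sum_subtractf[symmetric]
  using not_pos_and_neg_edge by (intro sum.cong) (auto simp: adj_eq)

lemma sum_mult_adj:
  "(\<Sum>w\<in>V. of_bool (R x w) * adj E \<sigma> w y) = walks2 R pos_edge x y - walks2 R neg_edge x y"
  unfolding walks2_def sum_subtractf[symmetric]
  using not_pos_and_neg_edge by (intro sum.cong) (auto simp: adj_eq)

lemma sum_adj_mult_adj_sq:
  "(\<Sum>w\<in>V. adj E \<sigma> x w * adj_sq V E \<sigma> w y) = (\<Sum>w\<in>V. adj_sq V E \<sigma> x w * adj E \<sigma> w y)"
proof -
  have "(\<Sum>w\<in>V. adj E \<sigma> x w * adj_sq V E \<sigma> w y)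
      = (\<Sum>w\<in>V. \<Sum>u\<in>V. adj E \<sigma> x w * adj E \<sigma> w u * adj E \<sigma> u y)"
    by (simp add: adj_sq_def sum_distrib_left mult.assoc)
  also have "\<dots> = (\<Sum>u\<in>V. \<Sum>w\<in>V. adj E \<sigma> x w * adj E \<sigma> w u * adj E \<sigma> u y)"
    by (rule sum.swap)
  also have "\<dots> = (\<Sum>u\<in>V. adj_sq V E \<sigma> x u * adj E \<sigma> u y)"
    by (simp add: adj_sq_def sum_distrib_right)
  finally show ?thesis .
qed

lemma sum_adj: "(\<Sum>w\<in>V. adj E \<sigma> x w) = int (pos_degree V E \<sigma> x) - int (neg_degree V E \<sigma> x)"
  by (simp add: adj_eq sum_subtractf pos_degree_eq_sum neg_degree_eq_sum del: sum_of_bool_eq)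

lemma net_regular_sum_adj:
  assumes "net_regular V E \<sigma> \<rho>" "x \<in> V"
  shows "(\<Sum>w\<in>V. adj E \<sigma> x w) = \<rho>" and "(\<Sum>w\<in>V. adj E \<sigma> w x) = \<rho>"
  using assms by (simp_all add: sum_adj net_regular_def adj_sym[of _ x])

lemma net_regular_sum_adj_sq:
  assumes "net_regular V E \<sigma> \<rho>" "x \<in> V"
  shows "(\<Sum>y\<in>V. adj_sq V E \<sigma> x y) = \<rho> * \<rho>"
proof -
  have "(\<Sum>y\<in>V. adj_sq V E \<sigma> x y) = (\<Sum>w\<in>V. adj E \<sigma> x w * (\<Sum>y\<in>V. adj E \<sigma> w y))"
    unfolding adj_sq_def by (subst sum.swap) (simp add: sum_distrib_left)
  also have "\<dots> = (\<Sum>w\<in>V. adj E \<sigma> x w * \<rho>)"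
    using assms(1) by (simp add: net_regular_sum_adj)
  finally show ?thesis
    using assms by (simp add: net_regular_sum_adj flip: sum_distrib_right)
qed

lemma srsg_adj_sq:
  assumes "srsg V E \<sigma> n r a b c" "x \<in> V" "y \<in> V"
  shows "adj_sq V E \<sigma> x y = (int r - c) * of_bool (x = y) + (a - c) * of_bool (pos_edge x y)
    + (b - c) * of_bool (neg_edge x y) + c"
  using assms sign_cases no_loop unfolding srsg_def pos_edge_def neg_edge_def
  by (cases "x = y"; cases "E x y") auto

lemma srsg_net_regular_param_eq:
  assumes "srsg V E \<sigma> n r a b c" "net_regular V E \<sigma> \<rho>" "x \<in> V"
  shows "\<rho> * \<rho> = int r - c + (a - c) * int (pos_degree V E \<sigma> x)
    + (b - c) * int (neg_degree V E \<sigma> x) + c * int (card V)"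
proof -
  have "\<rho> * \<rho> = (\<Sum>y\<in>V. (int r - c) * of_bool (x = y) + (a - c) * of_bool (pos_edge x y)
    + (b - c) * of_bool (neg_edge x y) + c)"
    using assms by (simp add: net_regular_sum_adj_sq[symmetric] srsg_adj_sq)
  also have "\<dots> = (int r - c) * (\<Sum>y\<in>V. of_bool (x = y)) + (a - c) * (\<Sum>y\<in>V. of_bool (pos_edge x y))
    + (b - c) * (\<Sum>y\<in>V. of_bool (neg_edge x y)) + c * int (card V)"
    using finite_V by (simp add: sum.distrib flip: sum_distrib_left del: sum_of_bool_eq)
  moreover have "(\<Sum>y\<in>V. of_bool (x = y)) = (1::int)"
    using assms(3) finite_V by simp
  ultimately show ?thesis
    by (simp add: pos_degree_eq_sum neg_degree_eq_sum del: sum_of_bool_eq)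
qed

text \<open>Expanding both sides of \<open>A \<cdot> A\<^sup>2 = A\<^sup>2 \<cdot> A\<close> with \<open>A = P - N\<close> and
  \<open>A\<^sup>2 = (r - c) I + (a - c) P + (b - c) N + c J\<close>, everything cancels except
  \<open>(a + b - 2 c) (P N - N P)\<close>; net-regularity is what makes \<open>A\<close> commute with \<open>J\<close>.\<close>
lemma srsg_net_regular_commute:
  assumes "srsg V E \<sigma> n r a b c" "net_regular V E \<sigma> \<rho>" "x \<in> V" "y \<in> V"
  shows "(a + b - 2 * c) * (walks2 pos_edge neg_edge x y - walks2 neg_edge pos_edge x y) = 0"
proof -
  have "(\<Sum>w\<in>V. adj E \<sigma> x w * adj_sq V E \<sigma> w y)
    = (\<Sum>w\<in>V. (int r - c) * (adj E \<sigma> x w * of_bool (w = y))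
        + (a - c) * (adj E \<sigma> x w * of_bool (pos_edge w y))
        + (b - c) * (adj E \<sigma> x w * of_bool (neg_edge w y)) + c * adj E \<sigma> x w)"
    using assms(1,4) by (intro sum.cong) (simp_all add: srsg_adj_sq algebra_simps)
  also have "\<dots> = (int r - c) * adj E \<sigma> x y
      + (a - c) * (walks2 pos_edge pos_edge x y - walks2 neg_edge pos_edge x y)
      + (b - c) * (walks2 pos_edge neg_edge x y - walks2 neg_edge neg_edge x y) + c * \<rho>"
    using assms finite_V
    by (simp only: sum.distrib sum_adj_mult net_regular_sum_adj walks2_eq_right flip: sum_distrib_left)
      (simp add: adj_eq)
  finally have left: "(\<Sum>w\<in>V. adj E \<sigma> x w * adj_sq V E \<sigma> w y) = \<dots>" .
  have "(\<Sum>w\<in>V. adj_sq V E \<sigma> x w * adj E \<sigma> w y)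
    = (\<Sum>w\<in>V. (int r - c) * (of_bool (x = w) * adj E \<sigma> w y)
        + (a - c) * (of_bool (pos_edge x w) * adj E \<sigma> w y)
        + (b - c) * (of_bool (neg_edge x w) * adj E \<sigma> w y) + c * adj E \<sigma> w y)"
    using assms(1,3) by (intro sum.cong) (simp_all add: srsg_adj_sq algebra_simps)
  also have "\<dots> = (int r - c) * adj E \<sigma> x y
      + (a - c) * (walks2 pos_edge pos_edge x y - walks2 pos_edge neg_edge x y)
      + (b - c) * (walks2 neg_edge pos_edge x y - walks2 neg_edge neg_edge x y) + c * \<rho>"
    using assms finite_V
    by (simp only: sum.distrib sum_mult_adj net_regular_sum_adj walks2_eq_left flip: sum_distrib_left)
      (simp add: adj_eq)
  finally have right: "(\<Sum>w\<in>V. adj_sq V E \<sigma> x w * adj E \<sigma> w y) = \<dots>" .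
  from left right sum_adj_mult_adj_sq show ?thesis
    by (simp add: algebra_simps)
qed

end

lemma mult_eq_minus_6_cases:
  fixes c d :: int
  assumes "c * d = -6" "0 < d"
  shows "c \<in> {-6, -3, -2, -1}"
proof -
  have "c * d < 0"
    using assms(1) by simp
  with assms(2) have "c < 0"
    by (simp add: mult_less_0_iff)
  then have "d \<le> 6"
    using assms mult_right_mono[of c "-1" d] by simp
  with assms(2) have "d = 1 \<or> d = 2 \<or> d = 3 \<or> d = 4 \<or> d = 5 \<or> d = 6"
    by presburger
  with assms(1) show ?thesis
    by (auto; presburger)
qed

locale srsg_r5_net1_a0_b1 = sgraph +
  fixes c :: int
  assumes srsg: "srsg V E \<sigma> (card V) 5 0 1 c"
    and regular: "regular V E 5"
    and net_regular: "net_regular V E \<sigma> 1"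
    and not_complete: "\<not> complete_graph V E"
begin

lemma exists_nonadj: "\<exists>x\<in>V. \<exists>y\<in>V. nonadj x y"
  using not_complete by (auto simp: complete_graph_def nonadj_def)

lemma pos_degree_eq_3: "x \<in> V \<Longrightarrow> pos_degree V E \<sigma> x = 3"
  and neg_degree_eq_2: "x \<in> V \<Longrightarrow> neg_degree V E \<sigma> x = 2"
  using regular net_regular degree_eq_pos_degree_add_neg_degree[of x]
  by (auto simp: regular_def net_regular_def)

lemma adj_sq_pos_edge: "pos_edge x y \<Longrightarrow> adj_sq V E \<sigma> x y = 0"
  and adj_sq_neg_edge: "neg_edge x y \<Longrightarrow> adj_sq V E \<sigma> x y = 1"
  and adj_sq_nonadj: "x \<in> V \<Longrightarrow> y \<in> V \<Longrightarrow> nonadj x y \<Longrightarrow> adj_sq V E \<sigma> x y = c"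
  using srsg edge_in_V[of x y] by (auto simp: srsg_def pos_edge_def neg_edge_def nonadj_def)

lemma c_mult_card: "c * (int (card V) - 6) = -6"
proof -
  obtain x where "x \<in> V" using exists_nonadj by blast
  with srsg_net_regular_param_eq[OF srsg net_regular] show ?thesis
    by (simp add: pos_degree_eq_3 neg_degree_eq_2 algebra_simps)
qed

lemma card_V_gt_6: "6 < card V"
proof -
  obtain x y where "x \<in> V" "y \<in> V" "nonadj x y" using exists_nonadj by blast
  then have "0 < card {z\<in>V. nonadj x z}"
    using finite_V by (auto simp: card_gt_0_iff)
  with \<open>x \<in> V\<close> show ?thesis
    using sum_nonadj[of x] regular by (simp add: sum_of_bool_eq_card regular_def)
qed

lemma walks2_commute:
  assumes "x \<in> V" "y \<in> V"
  shows "walks2 pos_edge neg_edge x y = walks2 neg_edge pos_edge x y"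
proof -
  have "1 - 2 * c \<noteq> 0" by presburger
  with srsg_net_regular_commute[OF srsg net_regular assms] show ?thesis
    by simp
qed

lemma adj_sq_eq_walks2_comm:
  "x \<in> V \<Longrightarrow> y \<in> V \<Longrightarrow> adj_sq V E \<sigma> x y
    = walks2 pos_edge pos_edge x y + walks2 neg_edge neg_edge x y - 2 * walks2 pos_edge neg_edge x y"
  and walks2_edge_edge_comm:
  "x \<in> V \<Longrightarrow> y \<in> V \<Longrightarrow> walks2 E E x y
    = walks2 pos_edge pos_edge x y + walks2 neg_edge neg_edge x y + 2 * walks2 pos_edge neg_edge x y"
  using walks2_commute adj_sq_eq_walks2 walks2_edge_edge by simp_all

lemma nonadj_walks2:
  assumes "x \<in> V" "y \<in> V" "nonadj x y"
  shows "walks2 pos_edge pos_edge x y + walks2 neg_edge neg_edge x y = 2 * walks2 pos_edge neg_edge x y + c"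
    and "4 * walks2 pos_edge neg_edge x y + c \<le> 5"
    and "12 \<le> int (card V) + 4 * walks2 pos_edge neg_edge x y + c"
proof -
  have deg: "degree V E x = 5" "degree V E y = 5"
    using assms regular by (auto simp: regular_def)
  show eq: "walks2 pos_edge pos_edge x y + walks2 neg_edge neg_edge x y = 2 * walks2 pos_edge neg_edge x y + c"
    using adj_sq_nonadj[OF assms] adj_sq_eq_walks2_comm[OF assms(1,2)] by simp
  show "4 * walks2 pos_edge neg_edge x y + c \<le> 5"
    using walks2_le_degree[of x y] deg eq walks2_edge_edge_comm[OF assms(1,2)] by linarith
  show "12 \<le> int (card V) + 4 * walks2 pos_edge neg_edge x y + c"
    using degree_add_le[OF assms(1,2)] assms(3) deg eq walks2_edge_edge_comm[OF assms(1,2)]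
    by (simp add: nonadj_def)
qed

lemma pos_edge_walks2:
  assumes "pos_edge x y"
  shows "walks2 pos_edge pos_edge x y + walks2 neg_edge neg_edge x y = 2 * walks2 pos_edge neg_edge x y"
    and "10 \<le> int (card V) + 4 * walks2 pos_edge neg_edge x y"
proof -
  have xy: "x \<in> V" "y \<in> V" "x \<noteq> y" "E x y"
    using assms pos_edge_in_V pos_edge_edge no_loop by blast+
  have deg: "degree V E x = 5" "degree V E y = 5"
    using xy regular by (auto simp: regular_def)
  show eq: "walks2 pos_edge pos_edge x y + walks2 neg_edge neg_edge x y = 2 * walks2 pos_edge neg_edge x y"
    using adj_sq_pos_edge[OF assms] adj_sq_eq_walks2_comm[OF xy(1,2)] by simp
  show "10 \<le> int (card V) + 4 * walks2 pos_edge neg_edge x y"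
    using degree_add_le[OF xy(1-3)] xy(4) deg eq walks2_edge_edge_comm[OF xy(1,2)] by simp
qed

lemma sum_walks2_pos_neg: "x \<in> V \<Longrightarrow> (\<Sum>y\<in>V. walks2 pos_edge neg_edge x y) = 6"
proof -
  assume x: "x \<in> V"
  have "(\<Sum>y\<in>V. walks2 pos_edge neg_edge x y) = (\<Sum>w\<in>V. of_bool (pos_edge x w) * 2)"
    unfolding sum_walks2
    by (intro sum.cong) (simp_all add: neg_degree_eq_2 flip: neg_degree_eq_sum del: sum_of_bool_eq)
  also have "\<dots> = 6"
    using x by (simp add: pos_degree_eq_3 flip: sum_distrib_right pos_degree_eq_sum
        del: sum_of_bool_eq sum_of_bool_mult_eq)
  finally show ?thesis .
qed

lemma sum_nonadj_eq: "x \<in> V \<Longrightarrow> (\<Sum>y\<in>V. of_bool (nonadj x y)) = int (card V) - 6"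
  using sum_nonadj regular by (simp add: regular_def)

lemma c_neq_minus_6: "c \<noteq> -6"
proof
  assume c: "c = -6"
  obtain x y where xy: "x \<in> V" "y \<in> V" "nonadj x y" using exists_nonadj by blast
  show False
    using nonadj_walks2[OF xy] c walks2_nonneg[of pos_edge pos_edge x y]
      walks2_nonneg[of neg_edge neg_edge x y] by linarith
qed

lemma c_neq_minus_2: "c \<noteq> -2"
proof
  assume c: "c = -2"
  then have "int (card V) = 9" using c_mult_card by simp
  obtain x y where xy: "x \<in> V" "y \<in> V" "nonadj x y" using exists_nonadj by blast
  show False
    using nonadj_walks2(2,3)[OF xy] c \<open>int (card V) = 9\<close> by presburger
qed

lemma c_neq_minus_3: "c \<noteq> -3"
proof
  assume c: "c = -3"
  then have n: "int (card V) = 8" using c_mult_card by simp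
  obtain x where x: "x \<in> V" using exists_nonadj by blast
  have "2 * of_bool (nonadj x y) + of_bool (pos_edge x y) \<le> walks2 pos_edge neg_edge x y" if y: "y \<in> V" for y
  proof (cases "nonadj x y")
    case True
    then show ?thesis
      using nonadj_walks2(3)[OF x y True] c n by (auto simp: nonadj_def dest: pos_edge_edge)
  next
    case False
    then show ?thesis
      using pos_edge_walks2(2)[of x y] n walks2_nonneg[of pos_edge neg_edge x y]
      by (cases "pos_edge x y") auto
  qed
  then have "(\<Sum>y\<in>V. 2 * of_bool (nonadj x y) + of_bool (pos_edge x y))
      \<le> (\<Sum>y\<in>V. walks2 pos_edge neg_edge x y)"
    by (rule sum_mono)
  then have "2 * (\<Sum>y\<in>V. of_bool (nonadj x y)) + (\<Sum>y\<in>V. of_bool (pos_edge x y)) \<le> (6::int)"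
    using sum_walks2_pos_neg[OF x] by (simp only: sum.distrib flip: sum_distrib_left)
  then show False
    using sum_nonadj_eq[OF x] pos_degree_eq_3[OF x] pos_degree_eq_sum[of x] n by simp
qed

context
  assumes c_eq: "c = -1"
begin

lemma walks2_pos_neg_eq_nonadj:
  assumes "x \<in> V" "y \<in> V"
  shows "walks2 pos_edge neg_edge x y = of_bool (nonadj x y)"
proof -
  have le: "of_bool (nonadj x z) \<le> walks2 pos_edge neg_edge x z" if z: "z \<in> V" for z
    using nonadj_walks2(1)[OF assms(1) z] c_eq walks2_nonneg[of pos_edge neg_edge x z]
      walks2_nonneg[of pos_edge pos_edge x z] walks2_nonneg[of neg_edge neg_edge x z]
    by (cases "nonadj x z") auto
  have "(\<Sum>z\<in>V. walks2 pos_edge neg_edge x z - of_bool (nonadj x z)) = 0"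
    using sum_walks2_pos_neg[OF assms(1)] sum_nonadj_eq[OF assms(1)] c_mult_card c_eq
    by (simp add: sum_subtractf del: sum_of_bool_eq)
  then have "\<forall>z\<in>V. walks2 pos_edge neg_edge x z - of_bool (nonadj x z) = 0"
    using le finite_V by (subst (asm) sum_nonneg_eq_0_iff) auto
  with assms(2) show ?thesis by simp
qed

lemma pos_edge_not_in_triangle:
  assumes "pos_edge x y"
  shows "\<not> (E x w \<and> E w y)"
proof
  assume "E x w \<and> E w y"
  have xy: "x \<in> V" "y \<in> V" "E x y"
    using assms pos_edge_in_V pos_edge_edge by blast+
  then have "walks2 pos_edge neg_edge x y = 0"
    using walks2_pos_neg_eq_nonadj by (simp add: nonadj_def)
  then have "walks2 E E x y = 0"
    using adj_sq_pos_edge[OF assms] adj_sq_eq_walks2_comm[OF xy(1,2)]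
      walks2_edge_edge_comm[OF xy(1,2)] by simp
  with \<open>E x w \<and> E w y\<close> xy show False
    using walks2_pos_iff[of E E x y] edge_in_V by auto
qed

lemma neg_edge_common_neg_neighbour:
  assumes "neg_edge x y"
  shows "\<exists>w\<in>V. neg_edge x w \<and> neg_edge w y"
proof -
  have xy: "x \<in> V" "y \<in> V" "E x y"
    using assms neg_edge_in_V neg_edge_edge by blast+
  then have "walks2 pos_edge neg_edge x y = 0"
    using walks2_pos_neg_eq_nonadj by (simp add: nonadj_def)
  moreover have "\<not> 0 < walks2 pos_edge pos_edge x y"
    using pos_edge_not_in_triangle xy(3) pos_edge_edge edge_sym
    by (auto simp: walks2_pos_iff)
  ultimately have "0 < walks2 neg_edge neg_edge x y"
    using adj_sq_neg_edge[OF assms] adj_sq_eq_walks2_comm[OF xy(1,2)] by simp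
  then show ?thesis
    by (simp add: walks2_pos_iff)
qed

lemma neg_neighbours_neg_adjacent:
  assumes "neg_edge x u" "neg_edge x v" "u \<noteq> v"
  shows "neg_edge u v"
proof -
  obtain w where w: "w \<in> V" "neg_edge x w" "neg_edge w u"
    using neg_edge_common_neg_neighbour[OF assms(1)] by blast
  have "w = v"
  proof (rule ccontr)
    assume "w \<noteq> v"
    moreover have "w \<noteq> u"
      using w(3) neg_edge_edge no_loop by blast
    ultimately have "card {u, v, w} = 3"
      using assms(3) by auto
    moreover have "card {u, v, w} \<le> card {z\<in>V. neg_edge x z}"
      using assms w neg_edge_in_V finite_V by (intro card_mono) auto
    moreover have "x \<in> V"
      using assms(1) neg_edge_in_V by blast
    ultimately show False
      using neg_degree_eq_2 neg_degree_eq_card by fastforce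
  qed
  with w show ?thesis
    using neg_edge_sym by blast
qed

lemma nonadj_pos_neg_walk:
  assumes "x \<in> V" "y \<in> V" "nonadj x y"
  shows "\<exists>w. pos_edge x w \<and> neg_edge w y"
  using walks2_pos_neg_eq_nonadj[OF assms(1,2)] assms(3) walks2_pos_iff[of pos_edge neg_edge x y]
  by auto

lemma nonadj_unique_common_pos_neighbour:
  assumes "x \<in> V" "y \<in> V" "nonadj x y"
  shows "\<exists>!w. pos_edge x w \<and> pos_edge w y"
proof -
  have "\<not> 0 < walks2 neg_edge neg_edge x y"
  proof
    assume "0 < walks2 neg_edge neg_edge x y"
    then obtain w where "neg_edge w x" "neg_edge w y"
      using neg_edge_sym by (auto simp: walks2_pos_iff)
    moreover have "x \<noteq> y"
      using assms(3) by (simp add: nonadj_def)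
    ultimately have "neg_edge x y"
      by (rule neg_neighbours_neg_adjacent)
    with assms(3) show False
      using neg_edge_edge by (simp add: nonadj_def)
  qed
  then have "walks2 pos_edge pos_edge x y = 1"
    using nonadj_walks2(1)[OF assms] walks2_pos_neg_eq_nonadj[OF assms(1,2)] assms(3) c_eq
      walks2_nonneg[of neg_edge neg_edge x y] by simp
  then obtain w where w: "w \<in> V" "pos_edge x w" "pos_edge w y"
    using walks2_pos_iff[of pos_edge pos_edge x y] by auto
  moreover have "u = w" if "pos_edge x u" "pos_edge u y" for u
    using walks2_le_1_unique[of pos_edge pos_edge x y u w] \<open>walks2 pos_edge pos_edge x y = 1\<close>
      that w pos_edge_in_V[OF that(1)] by simp
  ultimately show ?thesis
    by blast
qed

text \<open>Starting from a positive path \<open>i - p - v\<close>, the vertex \<open>r\<close> on a positive-negative path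
  from \<open>v\<close> to the other positive neighbour \<open>w\<close> of \<open>p\<close> is non-adjacent to \<open>i\<close>; their unique
  common positive neighbour turns out to be the vertex \<open>x\<close> of a positive-negative path from
  \<open>i\<close> to \<open>v\<close>, and then \<open>x r v\<close> is a triangle through the positive edge \<open>v r\<close>.\<close>
lemma minus_1_contradiction: False
proof -
  obtain i where i: "i \<in> V"
    using exists_nonadj by blast
  obtain p q s where "distinct [p, q, s]" and nb_i: "\<And>z. pos_edge i z \<longleftrightarrow> z \<in> {p, q, s}"
    using pos_neighbours[OF pos_degree_eq_3[OF i]] by blast
  have ip: "pos_edge i p"
    using nb_i by simp
  then have "p \<in> V"
    using pos_edge_in_V by blast
  obtain v w where "distinct [i, v, w]" and nb_p: "\<And>z. pos_edge p z \<longleftrightarrow> z \<in> {i, v, w}"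
    using pos_neighbours_through[OF pos_degree_eq_3[OF \<open>p \<in> V\<close>] pos_edge_sym[OF ip]] by blast
  then have "i \<noteq> v" "i \<noteq> w" "v \<noteq> w"
    by auto
  have pv: "pos_edge p v" and pw: "pos_edge p w"
    using nb_p by auto
  have "v \<in> V" "w \<in> V"
    using pv pw pos_edge_in_V by blast+
  have "nonadj i v" "nonadj i w" "nonadj v w"
    using pos_edge_not_in_triangle[of p i v] pos_edge_not_in_triangle[of p i w]
      pos_edge_not_in_triangle[of p v w] ip pv pw pos_edge_edge pos_edge_sym edge_sym
      \<open>i \<noteq> v\<close> \<open>i \<noteq> w\<close> \<open>v \<noteq> w\<close>
    by (meson nonadj_def)+
  obtain x where ix: "pos_edge i x" and xv: "neg_edge x v"
    using nonadj_pos_neg_walk[OF i \<open>v \<in> V\<close> \<open>nonadj i v\<close>] by blast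
  obtain y where iy: "pos_edge i y" and yw: "neg_edge y w"
    using nonadj_pos_neg_walk[OF i \<open>w \<in> V\<close> \<open>nonadj i w\<close>] by blast
  have "x \<noteq> p" "y \<noteq> p"
    using xv yw pv pw not_pos_and_neg_edge by blast+
  have "x \<noteq> y"
    using neg_neighbours_neg_adjacent[of x v w] xv yw \<open>v \<noteq> w\<close> \<open>nonadj v w\<close>
      neg_edge_edge nonadj_def by blast
  obtain r where vr: "pos_edge v r" and rw: "neg_edge r w"
    using nonadj_pos_neg_walk[OF \<open>v \<in> V\<close> \<open>w \<in> V\<close> \<open>nonadj v w\<close>] by blast
  have "r \<noteq> y"
  proof
    assume "r = y"
    then have "pos_edge v y \<and> pos_edge y i" and "pos_edge v p \<and> pos_edge p i"
      using vr iy ip pv pos_edge_sym by blast+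
    then have "y = p"
      using nonadj_unique_common_pos_neighbour[OF \<open>v \<in> V\<close> i] \<open>nonadj i v\<close>
      by (metis nonadj_def edge_sym)
    with \<open>y \<noteq> p\<close> show False ..
  qed
  then have ry: "neg_edge r y"
    using neg_neighbours_neg_adjacent[of w r y] rw yw neg_edge_sym by blast
  have "r \<in> V"
    using vr pos_edge_in_V by blast
  have "r \<noteq> i"
    using ry iy pos_edge_sym not_pos_and_neg_edge by blast
  have "\<not> E i r"
    using pos_edge_not_in_triangle[of i y r] iy ry neg_edge_edge edge_sym by blast
  obtain t where it: "pos_edge i t" and tr: "pos_edge t r"
    using nonadj_unique_common_pos_neighbour[OF i \<open>r \<in> V\<close>] \<open>r \<noteq> i\<close> \<open>\<not> E i r\<close>
    by (auto simp: nonadj_def)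
  have "t \<noteq> y"
    using tr ry pos_edge_sym neg_edge_sym not_pos_and_neg_edge by blast
  have "t \<noteq> p"
  proof
    assume "t = p"
    then have "r \<in> {i, v, w}"
      using tr nb_p by blast
    then show False
      using \<open>r \<noteq> i\<close> vr rw pos_edge_edge neg_edge_edge no_loop by blast
  qed
  have "t = x"
    using nb_i[of t] nb_i[of x] nb_i[of y] it ix iy \<open>t \<noteq> y\<close> \<open>t \<noteq> p\<close> \<open>x \<noteq> p\<close> \<open>y \<noteq> p\<close> \<open>x \<noteq> y\<close>
    by auto
  then show False
    using pos_edge_not_in_triangle[of x r v] tr xv vr pos_edge_sym pos_edge_edge neg_edge_edge edge_sym
    by blast
qed

end

lemma inconsistent: False
proof -
  have "c \<in> {-6, -3, -2, -1}"
    using mult_eq_minus_6_cases[OF c_mult_card] card_V_gt_6 by simp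
  then show False
    using c_neq_minus_6 c_neq_minus_3 c_neq_minus_2 minus_1_contradiction by blast
qed

end

theorem lemma3p9:
  fixes V :: "'a set" and E :: "'a \<Rightarrow> 'a \<Rightarrow> bool" and \<sigma> :: "'a \<Rightarrow> 'a \<Rightarrow> int"
    and n :: nat and a b c :: int
  assumes "srsg V E \<sigma> n 5 a b c"
    and "class_C1 V E a b c \<or> class_C4 V E a b c \<or> class_C5 V E a b c"
    and "connected_graph V E"
    and "\<not> complete_graph V E"
    and "regular V E 5"
    and "net_regular V E \<sigma> 1"
  shows "(a, b) \<noteq> (0, 1)"
proof
  assume "(a, b) = (0, 1)"
  with assms(1) have "srsg V E \<sigma> (card V) 5 0 1 c"
    by (simp add: srsg_def)
  then interpret srsg_r5_net1_a0_b1 V E \<sigma> c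
    using assms(4-6) by unfold_locales (simp_all add: srsg_def)
  show False
    by (rule inconsistent)
qed

end
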